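(* Let $G$ be a two-player objective game ($n=2$) and let $(a^*_1,a^*_2)\in A_1\times A_2$ be Pareto efficient with respect to $\pi$. If $(a^*_1,a^*_2)$ is a strict Nash equilibrium of $G$, then $(a^*_1,a^*_2)$ is stable under perfect observability, i.e. there is $\mu\in\mathcal M(\Theta^2)$ and a stable configuration $(\mu,b)$ whose aggregate outcome is the point mass at $(a^*_1,a^*_2)$.
   Context: Objective game: $G=(N,A,\pi)$ is a finite $n$-player normal-form game, $N=\{1,\dots,n\}$, finite action sets $A_i$, $A=\prod_{i\in N}A_i$, material payoff (fitness) functions $\pi_i:A\to\mathbb{R}$, extended multilinearly to mixed profiles in $\prod_{i}\Delta(A_i)$; $\pi=(\pi_1,\dots,\pi_n)$. Preference types: $\Theta=\mathbb{R}^A$ (utility functions on $A$, extended multilinearly to mixed profiles). $\mathcal{M}(\Theta^n)$ is the set of product distributions $\mu=\mu_1\times\dots\times\mu_n$ on $\Theta^n$ with each $\mu_i$ finitely supported; $\operatorname{supp}\mu=\prod_i\operatorname{supp}\mu_i$, $\mu(\theta)=\prod_i\mu_i(\theta_i)$, $\mu_{-i}(\theta_{-i})=\prod_{j\neq i}\mu_j(\theta_j)$. Mutants: for nonempty $J\subseteq N$, a mutant sub-profile is $\tilde\theta_J\in\prod_{j\in J}(\Theta\setminus\operatorname{supp}\mu_j)$ with shares $\varepsilon=(\varepsilon_j)_{j\in J}\in(0,1)^{|J|}$, $\|\varepsilon\|=\max_j\varepsilon_j$; the post-entry distribution $\tilde\mu^\varepsilon$ has $\tilde\mu^\varepsilon_i=(1-\varepsilon_i)\mu_i+\varepsilon_i\delta_{\tilde\theta_i}$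 for $i\in J$ and $\tilde\mu^\varepsilon_i=\mu_i$ otherwise. Perfect observability: for $\mu\in\mathcal M(\Theta^n)$, an equilibrium is a map $b:\operatorname{supp}\mu\to\prod_i\Delta(A_i)$ such that for each $\theta$, $b(\theta)$ is a Nash equilibrium of the normal-form game with action sets $A_i$ and payoffs $\theta_1,\dots,\theta_n$; $B_1(\mu)$ is the set of these; $(\mu,b)$ with $b\in B_1(\mu)$ is a configuration, with aggregate outcome $\varphi_{\mu,b}(a)=\sum_{\theta\in\operatorname{supp}\mu}\mu(\theta)\prod_{i}b_i(\theta)(a_i)$. Average fitness of $\theta_i\in\operatorname{supp}\mu_i$: $\Pi_{\theta_i}(\mu;b)=\sum_{\theta'_{-i}\in\operatorname{supp}\mu_{-i}}\mu_{-i}(\theta'_{-i})\pi_i(b(\theta_i,\theta'_{-i}))$. $(\mu,b)$ is balanced if for each $i$ all types in $\operatorname{supp}\mu_i$ have equal average fitness. Focal set: $B_1(\tilde\mu^\varepsilon;b)=\{\tilde b\in B_1(\tilde\mu^\varepsilon):\tilde b(\theta)=b(\theta)\ \forall\theta\in\operatorname{supp}\mu\}$. $(\mu,b)$ is stable if it is balanced and for every nonempty $J\subseteq N$ and every mutant sub-profile $\tilde\theta_J$ there is $\bar\epsilon\in(0,1)$ such that for every $\varepsilon\in(0,1)^{|J|}$ with $\|\varepsilon\|<\bar\epsilon$ and every $\tilde b\in B_1(\tilde\mu^\varepsilon;b)$, either (i) there is $j\in J$ with $\Pi_{\theta_j}(\tilde\mu^\varepsilon;\tilde b)>\Pi_{\tilde\theta_j}(\tilde\mu^\varepsilon;\tilde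 b)$ for all $\theta_j\in\operatorname{supp}\mu_j$, or (ii) for every $i\in N$ all types in $\operatorname{supp}\tilde\mu^\varepsilon_i$ have equal average fitness under $(\tilde\mu^\varepsilon,\tilde b)$. A profile $\sigma\in\prod_i\Delta(A_i)$ is stable if the product distribution $\varphi_\sigma(a)=\prod_i\sigma_i(a_i)$ is the aggregate outcome of some stable configuration. Pareto notions: $\sigma$ Pareto dominates $\sigma'$ if $\pi_i(\sigma)\ge\pi_i(\sigma')$ for all $i$ with strict inequality for some $i$; $\sigma$ is Pareto efficient if no profile in $\prod_i\Delta(A_i)$ Pareto dominates it. A strict Nash equilibrium $a^*$ satisfies $\pi_i(a^* )>\pi_i(a_i,a^*_{-i})$ for all $i$ and all $a_i\neq a^*_i$. *)

theory Defs
  imports Complex_Main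
begin

text \<open>A (preference) type is a utility function on A = 'a x 'b,
  written curried: 'a \<Rightarrow> 'b \<Rightarrow> real.\<close>

type_synonym ('a, 'b) ptype = "'a \<Rightarrow> 'b \<Rightarrow> real"

definition mixed :: "('c::finite \<Rightarrow> real) \<Rightarrow> bool" where
  "mixed s \<longleftrightarrow> (\<forall>x. 0 \<le> s x) \<and> sum s UNIV = 1"

definition EU :: "('a::finite, 'b::finite) ptype \<Rightarrow> ('a \<Rightarrow> real) \<Rightarrow> ('b \<Rightarrow> real) \<Rightarrow> real" where
  "EU u s1 s2 = (\<Sum>a1\<in>UNIV. \<Sum>a2\<in>UNIV. s1 a1 * s2 a2 * u a1 a2)"

definition nash :: "('a::finite, 'b::finite) ptype \<Rightarrow> ('a, 'b) ptype \<Rightarrow> ('a \<Rightarrow> real) \<Rightarrow> ('b \<Rightarrow> real) \<Rightarrow> bool" where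
  "nash th1 th2 s1 s2 \<longleftrightarrow> mixed s1 \<and> mixed s2 \<and>
     (\<forall>t1. mixed t1 \<longrightarrow> EU th1 t1 s2 \<le> EU th1 s1 s2) \<and>
     (\<forall>t2. mixed t2 \<longrightarrow> EU th2 s1 t2 \<le> EU th2 s1 s2)"

definition fdist :: "('t \<Rightarrow> real) \<Rightarrow> bool" where
  "fdist mu \<longleftrightarrow> (\<forall>x. 0 \<le> mu x) \<and> finite {x. mu x \<noteq> 0} \<and> sum mu {x. mu x \<noteq> 0} = 1"

definition supp :: "('t \<Rightarrow> real) \<Rightarrow> 't set" where
  "supp mu = {x. 0 < mu x}"

type_synonym ('a, 'b) eqmap = "('a, 'b) ptype \<Rightarrow> ('a, 'b) ptype \<Rightarrow> ('a \<Rightarrow> real) \<times> ('b \<Rightarrow> real)"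

definition B1 :: "(('a::finite, 'b::finite) ptype \<Rightarrow> real) \<Rightarrow> (('a, 'b) ptype \<Rightarrow> real) \<Rightarrow> ('a, 'b) eqmap \<Rightarrow> bool" where
  "B1 mu1 mu2 b \<longleftrightarrow> (\<forall>th1\<in>supp mu1. \<forall>th2\<in>supp mu2. nash th1 th2 (fst (b th1 th2)) (snd (b th1 th2)))"

definition outcome :: "(('a::finite, 'b::finite) ptype \<Rightarrow> real) \<Rightarrow> (('a, 'b) ptype \<Rightarrow> real) \<Rightarrow> ('a, 'b) eqmap \<Rightarrow> 'a \<Rightarrow> 'b \<Rightarrow> real" where
  "outcome mu1 mu2 b a1 a2 = (\<Sum>th1\<in>supp mu1. \<Sum>th2\<in>supp mu2.
      mu1 th1 * mu2 th2 * fst (b th1 th2) a1 * snd (b th1 th2) a2)"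

definition fit1 :: "('a::finite, 'b::finite) ptype \<Rightarrow> (('a, 'b) ptype \<Rightarrow> real) \<Rightarrow> ('a, 'b) eqmap \<Rightarrow> ('a, 'b) ptype \<Rightarrow> real" where
  "fit1 pi1 mu2 b th1 = (\<Sum>th2\<in>supp mu2. mu2 th2 * EU pi1 (fst (b th1 th2)) (snd (b th1 th2)))"

definition fit2 :: "('a::finite, 'b::finite) ptype \<Rightarrow> (('a, 'b) ptype \<Rightarrow> real) \<Rightarrow> ('a, 'b) eqmap \<Rightarrow> ('a, 'b) ptype \<Rightarrow> real" where
  "fit2 pi2 mu1 b th2 = (\<Sum>th1\<in>supp mu1. mu1 th1 * EU pi2 (fst (b th1 th2)) (snd (b th1 th2)))"

definition balanced :: "('a::finite, 'b::finite) ptype \<Rightarrow> ('a, 'b) ptype \<Rightarrow> (('a, 'b) ptype \<Rightarrow> real) \<Rightarrow> (('a, 'b) ptype \<Rightarrow> real) \<Rightarrow> ('a, 'b) eqmap \<Rightarrow> bool" where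
  "balanced pi1 pi2 mu1 mu2 b \<longleftrightarrow>
     (\<forall>th\<in>supp mu1. \<forall>th'\<in>supp mu1. fit1 pi1 mu2 b th = fit1 pi1 mu2 b th') \<and>
     (\<forall>th\<in>supp mu2. \<forall>th'\<in>supp mu2. fit2 pi2 mu1 b th = fit2 pi2 mu1 b th')"

text \<open>Post-entry distribution of one population: None = no mutant in that population,
  Some thm = mutant type thm with share eps.\<close>
definition post :: "('t \<Rightarrow> real) \<Rightarrow> 't option \<Rightarrow> real \<Rightarrow> 't \<Rightarrow> real" where
  "post mu m eps = (case m of None \<Rightarrow> mu
      | Some thm \<Rightarrow> (\<lambda>th. (1 - eps) * mu th + eps * (if th = thm then 1 else 0)))"

definition focal :: "(('a::finite, 'b::finite) ptype \<Rightarrow> real) \<Rightarrow> (('a, 'b) ptype \<Rightarrow> real) \<Rightarrow> ('a, 'b) eqmap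
     \<Rightarrow> (('a, 'b) ptype \<Rightarrow> real) \<Rightarrow> (('a, 'b) ptype \<Rightarrow> real) \<Rightarrow> ('a, 'b) eqmap \<Rightarrow> bool" where
  "focal mu1 mu2 b mu1' mu2' b' \<longleftrightarrow> B1 mu1' mu2' b' \<and>
     (\<forall>th1\<in>supp mu1. \<forall>th2\<in>supp mu2. b' th1 th2 = b th1 th2)"

text \<open>Stability against a given mutant sub-profile (J = players with Some).\<close>
definition stable_against :: "('a::finite, 'b::finite) ptype \<Rightarrow> ('a, 'b) ptype \<Rightarrow> (('a, 'b) ptype \<Rightarrow> real) \<Rightarrow> (('a, 'b) ptype \<Rightarrow> real)
     \<Rightarrow> ('a, 'b) eqmap \<Rightarrow> ('a, 'b) ptype option \<Rightarrow> ('a, 'b) ptype option \<Rightarrow> bool" where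
  "stable_against pi1 pi2 mu1 mu2 b m1 m2 \<longleftrightarrow>
    (\<exists>ebar. 0 < ebar \<and> ebar < 1 \<and>
      (\<forall>e1 e2. 0 < e1 \<and> e1 < ebar \<and> 0 < e2 \<and> e2 < ebar \<longrightarrow>
        (let mu1' = post mu1 m1 e1; mu2' = post mu2 m2 e2 in
         \<forall>b'. focal mu1 mu2 b mu1' mu2' b' \<longrightarrow>
           ((\<exists>thm. m1 = Some thm \<and>
                (\<forall>th\<in>supp mu1. fit1 pi1 mu2' b' th > fit1 pi1 mu2' b' thm)) \<or>
            (\<exists>thm. m2 = Some thm \<and>
                (\<forall>th\<in>supp mu2. fit2 pi2 mu1' b' th > fit2 pi2 mu1' b' thm)) \<or>
            balanced pi1 pi2 mu1' mu2' b'))))"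

definition stable_config :: "('a::finite, 'b::finite) ptype \<Rightarrow> ('a, 'b) ptype \<Rightarrow> (('a, 'b) ptype \<Rightarrow> real) \<Rightarrow> (('a, 'b) ptype \<Rightarrow> real)
     \<Rightarrow> ('a, 'b) eqmap \<Rightarrow> bool" where
  "stable_config pi1 pi2 mu1 mu2 b \<longleftrightarrow>
     fdist mu1 \<and> fdist mu2 \<and> B1 mu1 mu2 b \<and> balanced pi1 pi2 mu1 mu2 b \<and>
     (\<forall>m1 m2. (m1 \<noteq> None \<or> m2 \<noteq> None) \<longrightarrow>
        (\<forall>thm. m1 = Some thm \<longrightarrow> thm \<notin> supp mu1) \<longrightarrow>
        (\<forall>thm. m2 = Some thm \<longrightarrow> thm \<notin> supp mu2) \<longrightarrow>
        stable_against pi1 pi2 mu1 mu2 b m1 m2)"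

definition pareto_efficient :: "('a::finite, 'b::finite) ptype \<Rightarrow> ('a, 'b) ptype \<Rightarrow> ('a \<Rightarrow> real) \<Rightarrow> ('b \<Rightarrow> real) \<Rightarrow> bool" where
  "pareto_efficient pi1 pi2 s1 s2 \<longleftrightarrow>
     \<not> (\<exists>t1 t2. mixed t1 \<and> mixed t2 \<and>
          EU pi1 t1 t2 \<ge> EU pi1 s1 s2 \<and> EU pi2 t1 t2 \<ge> EU pi2 s1 s2 \<and>
          (EU pi1 t1 t2 > EU pi1 s1 s2 \<or> EU pi2 t1 t2 > EU pi2 s1 s2))"

definition strict_nash :: "('a, 'b) ptype \<Rightarrow> ('a, 'b) ptype \<Rightarrow> 'a \<Rightarrow> 'b \<Rightarrow> bool" where
  "strict_nash pi1 pi2 a1 a2 \<longleftrightarrow>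
     (\<forall>x. x \<noteq> a1 \<longrightarrow> pi1 a1 a2 > pi1 x a2) \<and> (\<forall>y. y \<noteq> a2 \<longrightarrow> pi2 a1 a2 > pi2 a1 y)"

definition pure :: "'c \<Rightarrow> 'c \<Rightarrow> real" where
  "pure x = (\<lambda>y. if y = x then 1 else 0)"

end

theory Submission
  imports Defs
begin

text \<open>
  The incumbents are the types \<open>committed1 a1\<close> and \<open>committed2 a2\<close>, for which the
  equilibrium actions are strictly dominant, so every equilibrium involving an incumbent has it
  play its equilibrium action. A mutant entering one population alone only meets incumbents of
  the other population and, \<open>a1\<close> and \<open>a2\<close> being best replies, earns at most the incumbent
  payoff. When mutants enter both populations, each mutant loses, against the incumbents of the
  other population, an amount proportional to its probability of deviating (strictness), and can
  compensate only in the rare matches with the other mutant. There, Pareto efficiency bounds the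
  rate at which one player can gain at the other's expense: this holds at the finitely many pure
  profiles and extends to mixed profiles by convexity in each player's strategy. Hence for small
  mutant shares neither mutant can do at least as well as its incumbent unless both play the
  equilibrium and earn exactly the incumbent payoffs, which keeps the populations balanced.
\<close>

section \<open>Mixed strategies and expected payoffs\<close>

lemma mixed_nonneg: "mixed s \<Longrightarrow> 0 \<le> s x"
  unfolding mixed_def by simp

lemma mixed_sum_1: "mixed s \<Longrightarrow> sum s UNIV = 1"
  unfolding mixed_def by simp

lemma mixed_le_1: "mixed s \<Longrightarrow> s x \<le> (1::real)"
  unfolding mixed_def by (metis UNIV_I finite member_le_sum)

lemma mixed_pure: "mixed (pure x :: 'c::finite \<Rightarrow> real)"
  unfolding mixed_def pure_def by simp

lemma pure_self [simp]: "pure x x = 1"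
  unfolding pure_def by simp

lemma mixed_eq_pure:
  assumes "mixed s" "s a = 1"
  shows "s = pure a"
proof -
  have "sum s (UNIV - {a}) = 0"
    using assms sum.remove[of UNIV a s] by (simp add: mixed_sum_1)
  then have "\<forall>x\<in>UNIV - {a}. s x = 0"
    by (subst (asm) sum_nonneg_eq_0_iff) (auto simp: mixed_nonneg[OF assms(1)])
  then show ?thesis
    using assms(2) unfolding pure_def by auto
qed

lemma sum_mult_pure: "(\<Sum>y\<in>UNIV. (pure x :: 'c::finite \<Rightarrow> real) y * f y) = f x"
  unfolding pure_def by (simp add: if_distrib[of "\<lambda>c. c * _"] cong: if_cong)

lemma sum_mult_pure_right: "(\<Sum>y\<in>UNIV. f y * (pure x :: 'c::finite \<Rightarrow> real) y) = f x"
  using sum_mult_pure[of x f] by (simp add: mult.commute)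

lemma EU_pure_left: "EU u (pure x) t = (\<Sum>y\<in>UNIV. t y * u x y)"
  unfolding EU_def by (simp add: mult.assoc sum_distrib_left[symmetric] sum_mult_pure)

lemma EU_pure_right: "EU u s (pure y) = (\<Sum>x\<in>UNIV. s x * u x y)"
  unfolding EU_def by (simp add: mult.assoc sum_distrib_left[symmetric] sum_mult_pure)

lemma EU_pure_pure: "EU u (pure x) (pure y) = u x y"
  by (simp add: EU_pure_left sum_mult_pure mult.commute)

lemma EU_expand_left: "EU u s t = (\<Sum>x\<in>UNIV. s x * EU u (pure x) t)"
  unfolding EU_pure_left unfolding EU_def by (simp add: sum_distrib_left mult.assoc)

lemma EU_diff_const:
  "mixed s \<Longrightarrow> mixed t \<Longrightarrow> EU (\<lambda>x y. u x y - k) s t = EU u s t - k"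
  unfolding EU_def mixed_def
  by (simp add: algebra_simps sum_subtractf sum_distrib_left[symmetric] sum_distrib_right[symmetric])

lemma EU_uminus: "EU (\<lambda>x y. - u x y) s t = - EU u s t"
  unfolding EU_def by (simp add: sum_negf)

lemma EU_row_only: "mixed t \<Longrightarrow> EU (\<lambda>x _. f x) s t = (\<Sum>x\<in>UNIV. s x * f x)"
  unfolding EU_def mixed_def
  by (simp add: mult.commute mult.left_commute sum_distrib_left[symmetric])

lemma EU_column_only: "mixed s \<Longrightarrow> EU (\<lambda>_ y. g y) s t = (\<Sum>y\<in>UNIV. t y * g y)"
  unfolding EU_def by (subst sum.swap) (simp add: mult.assoc sum_distrib_right[symmetric] mixed_sum_1)

lemma sum_mixed_deviation_lower:
  fixes s f :: "'c::finite \<Rightarrow> real"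
  assumes s: "mixed s" and "f a = 0" and "\<forall>x. x \<noteq> a \<longrightarrow> lo \<le> f x"
  shows "lo * (1 - s a) \<le> (\<Sum>x\<in>UNIV. s x * f x)"
proof -
  have "lo * (1 - s a) = (\<Sum>x\<in>UNIV. lo * s x - (if x = a then lo * s a else 0))"
    using s by (simp add: sum_subtractf sum_distrib_left[symmetric] mixed_sum_1 algebra_simps)
  also have "\<dots> = (\<Sum>x\<in>UNIV. s x * (if x = a then 0 else lo))"
    by (rule sum.cong) auto
  also have "\<dots> \<le> (\<Sum>x\<in>UNIV. s x * f x)"
    using assms mixed_nonneg[OF s] by (intro sum_mono mult_left_mono) auto
  finally show ?thesis .
qed

lemma EU_pure_right_gap:
  assumes "mixed s" "\<forall>x. x \<noteq> a \<longrightarrow> lo \<le> u a y - u x y"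
  shows "lo * (1 - s a) \<le> u a y - EU u s (pure y)"
proof -
  have "u a y - EU u s (pure y) = (\<Sum>x\<in>UNIV. s x * (u a y - u x y))"
    using assms(1) unfolding EU_pure_right mixed_def
    by (simp add: right_diff_distrib sum_subtractf sum_distrib_right[symmetric])
  then show ?thesis
    using sum_mixed_deviation_lower[OF assms(1), of "\<lambda>x. u a y - u x y"] assms(2) by simp
qed

lemma EU_pure_left_gap:
  assumes "mixed t" "\<forall>y. y \<noteq> b \<longrightarrow> lo \<le> u x b - u x y"
  shows "lo * (1 - t b) \<le> u x b - EU u (pure x) t"
proof -
  have "u x b - EU u (pure x) t = (\<Sum>y\<in>UNIV. t y * (u x b - u x y))"
    using assms(1) unfolding EU_pure_left mixed_def
    by (simp add: right_diff_distrib sum_subtractf sum_distrib_right[symmetric])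
  then show ?thesis
    using sum_mixed_deviation_lower[OF assms(1), of "\<lambda>y. u x b - u x y"] assms(2) by simp
qed

lemma nash_mixed: "nash th1 th2 s1 s2 \<Longrightarrow> mixed s1 \<and> mixed s2"
  unfolding nash_def by blast

section \<open>Pareto efficiency bounds the rate of payoff tradeoffs\<close>

definition pareto_improvement :: "real \<Rightarrow> real \<Rightarrow> bool" where
  "pareto_improvement d1 d2 \<longleftrightarrow> 0 \<le> d1 \<and> 0 \<le> d2 \<and> (0 < d1 \<or> 0 < d2)"

definition bounded_tradeoff :: "real \<Rightarrow> real \<Rightarrow> real \<Rightarrow> bool" where
  "bounded_tradeoff r d1 d2 \<longleftrightarrow> (0 < d1 \<longrightarrow> d1 + r * d2 \<le> 0)"

lemma pareto_improvement_scale: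
  "0 < c \<Longrightarrow> pareto_improvement (c * d1) (c * d2) \<longleftrightarrow> pareto_improvement d1 d2"
  unfolding pareto_improvement_def by (simp add: zero_le_mult_iff zero_less_mult_iff)

lemma bounded_tradeoff_mono:
  "0 \<le> r \<Longrightarrow> r \<le> r' \<Longrightarrow> bounded_tradeoff r d1 d2 \<Longrightarrow> bounded_tradeoff r' d1 d2"
  unfolding bounded_tradeoff_def
proof (intro impI)
  assume "0 \<le> r" "r \<le> r'" "0 < d1 \<longrightarrow> d1 + r * d2 \<le> 0" "0 < d1"
  moreover from this have "d2 < 0"
    by (smt (verit) mult_nonneg_nonneg)
  ultimately show "d1 + r' * d2 \<le> 0"
    by (smt (verit) mult_right_mono_neg)
qed

lemma no_pareto_improvement_cone:
  fixes V1 V2 \<mu> :: "'c::finite \<Rightarrow> real"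
  assumes no_imp: "\<forall>w. mixed w \<longrightarrow> \<not> pareto_improvement (\<Sum>k\<in>UNIV. w k * V1 k) (\<Sum>k\<in>UNIV. w k * V2 k)"
    and \<mu>: "\<forall>k. 0 \<le> \<mu> k"
  shows "\<not> pareto_improvement (\<Sum>k\<in>UNIV. \<mu> k * V1 k) (\<Sum>k\<in>UNIV. \<mu> k * V2 k)"
proof (cases "sum \<mu> UNIV = 0")
  case True
  then have "\<mu> = (\<lambda>_. 0)"
    using \<mu> by (simp add: sum_nonneg_eq_0_iff fun_eq_iff)
  then show ?thesis
    by (simp add: pareto_improvement_def)
next
  case False
  define S where "S = sum \<mu> UNIV"
  have S: "0 < S"
    using False \<mu> unfolding S_def by (simp add: less_le sum_nonneg)
  have "mixed (\<lambda>k. \<mu> k / S)"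
    using \<mu> S unfolding mixed_def S_def by (simp add: sum_divide_distrib[symmetric])
  then have "\<not> pareto_improvement (\<Sum>k\<in>UNIV. \<mu> k / S * V1 k) (\<Sum>k\<in>UNIV. \<mu> k / S * V2 k)"
    using no_imp by blast
  then have "\<not> pareto_improvement (inverse S * (\<Sum>k\<in>UNIV. \<mu> k * V1 k)) (inverse S * (\<Sum>k\<in>UNIV. \<mu> k * V2 k))"
    by (simp add: sum_distrib_left divide_inverse ac_simps)
  then show ?thesis
    using S by (simp add: pareto_improvement_scale)
qed

lemma two_parts_tradeoff:
  fixes a1 a2 b1 b2 r :: real
  assumes r: "0 < r" and a1: "a1 \<le> 0" and b: "b1 + r * b2 \<le> 0" and gain: "0 < a1 + b1"
    and det: "a2 * b1 \<le> b2 * a1"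
  shows "(a1 + b1) + r * (a2 + b2) \<le> 0"
proof -
  have b1: "0 < b1"
    using a1 gain by linarith
  have "b1 * ((a1 + b1) + r * (a2 + b2)) = (a1 + b1) * b1 + r * (a2 * b1) + r * (b1 * b2)"
    by (simp add: algebra_simps)
  also have "\<dots> \<le> (a1 + b1) * b1 + r * (b2 * a1) + r * (b1 * b2)"
    using det r by simp
  also have "\<dots> = (a1 + b1) * (b1 + r * b2)"
    by (simp add: algebra_simps)
  also have "\<dots> \<le> 0"
    using gain b by (simp add: mult_nonneg_nonpos)
  finally show ?thesis
    using b1 by (simp add: mult_le_0_iff)
qed

lemma bounded_tradeoff_convex:
  fixes V1 V2 lam :: "'c::finite \<Rightarrow> real"
  assumes r: "0 < r" and vertices: "\<forall>k. bounded_tradeoff r (V1 k) (V2 k)"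
    and no_imp: "\<forall>w. mixed w \<longrightarrow> \<not> pareto_improvement (\<Sum>k\<in>UNIV. w k * V1 k) (\<Sum>k\<in>UNIV. w k * V2 k)"
    and lam: "mixed lam"
  shows "bounded_tradeoff r (\<Sum>k\<in>UNIV. lam k * V1 k) (\<Sum>k\<in>UNIV. lam k * V2 k)"
  unfolding bounded_tradeoff_def
proof
  assume gain: "0 < (\<Sum>k\<in>UNIV. lam k * V1 k)"
  define S where "S = {k. 0 < V1 k + r * V2 k}"
  define part where "part T V = (\<Sum>k\<in>UNIV. lam k * (if k \<in> T then V k else 0))" for T V
  have split: "(\<Sum>k\<in>UNIV. lam k * V k) = part S V + part (- S) V" for V
    unfolding part_def sum.distrib[symmetric] by (rule sum.cong) auto
  have part_nonpos: "part T V \<le> 0" if "\<forall>k\<in>T. V k \<le> 0" for T V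
    unfolding part_def using that mixed_nonneg[OF lam]
    by (intro sum_nonpos) (simp add: mult_nonneg_nonpos)
  have S_V1: "V1 k \<le> 0" and S_V2: "0 < V2 k" if "k \<in> S" for k
  proof -
    show "V1 k \<le> 0"
      using that vertices unfolding S_def bounded_tradeoff_def by (metis mem_Collect_eq not_le)
    with that have "0 < r * V2 k"
      unfolding S_def by simp
    then show "0 < V2 k"
      using r by (simp add: zero_less_mult_iff)
  qed
  have A1: "part S V1 \<le> 0"
    using S_V1 by (intro part_nonpos) blast
  have A2: "0 \<le> part S V2"
    unfolding part_def using S_V2 mixed_nonneg[OF lam] by (intro sum_nonneg) (simp add: less_imp_le)
  have B: "part (- S) V1 + r * part (- S) V2 \<le> 0"
  proof -
    have "part (- S) V1 + r * part (- S) V2 = part (- S) (\<lambda>k. V1 k + r * V2 k)"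
      unfolding part_def sum_distrib_left sum.distrib[symmetric] by (rule sum.cong) (auto simp: algebra_simps)
    also have "\<dots> \<le> 0"
      by (rule part_nonpos) (auto simp: S_def)
    finally show ?thesis .
  qed
  have "0 < part (- S) V1"
    using gain A1 split[of V1] by linarith
  with B have "r * part (- S) V2 < 0"
    by linarith
  then have B2: "part (- S) V2 < 0"
    using r by (simp add: mult_less_0_iff)
  text \<open>Reweighting the two parts cancels the second coordinate.\<close>
  define \<mu> where "\<mu> k = lam k * (if k \<in> S then - part (- S) V2 else part S V2)" for k
  have \<mu>_sum: "(\<Sum>k\<in>UNIV. \<mu> k * V k) = - part (- S) V2 * part S V + part S V2 * part (- S) V" for V
    unfolding \<mu>_def part_def sum_distrib_left sum.distrib[symmetric] by (rule sum.cong) auto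
  have "\<not> pareto_improvement (\<Sum>k\<in>UNIV. \<mu> k * V1 k) (\<Sum>k\<in>UNIV. \<mu> k * V2 k)"
    using no_imp A2 B2 mixed_nonneg[OF lam] unfolding \<mu>_def
    by (intro no_pareto_improvement_cone) auto
  then have "part S V2 * part (- S) V1 \<le> part (- S) V2 * part S V1"
    unfolding \<mu>_sum pareto_improvement_def by (auto simp: algebra_simps)
  then show "(\<Sum>k\<in>UNIV. lam k * V1 k) + r * (\<Sum>k\<in>UNIV. lam k * V2 k) \<le> 0"
    using two_parts_tradeoff[OF r A1 B] gain split[of V1] split[of V2] by simp
qed

text \<open>Convexity in each player's strategy separately suffices, although the payoff pairs
  of product profiles need not form a convex set.\<close>
lemma bounded_tradeoff_mixed:
  fixes u v :: "'a::finite \<Rightarrow> 'b::finite \<Rightarrow> real"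
  assumes r: "0 < r" and pure_tradeoff: "\<forall>x y. bounded_tradeoff r (u x y) (v x y)"
    and no_imp: "\<forall>s t. mixed s \<longrightarrow> mixed t \<longrightarrow> \<not> pareto_improvement (EU u s t) (EU v s t)"
    and s: "mixed s" and t: "mixed t"
  shows "bounded_tradeoff r (EU u s t) (EU v s t)"
proof -
  have row: "bounded_tradeoff r (EU u (pure x) t) (EU v (pure x) t)" for x
    unfolding EU_pure_left
  proof (rule bounded_tradeoff_convex[OF r _ _ t])
    show "\<forall>y. bounded_tradeoff r (u x y) (v x y)"
      using pure_tradeoff by blast
    show "\<forall>w. mixed w \<longrightarrow> \<not> pareto_improvement (\<Sum>y\<in>UNIV. w y * u x y) (\<Sum>y\<in>UNIV. w y * v x y)"
    proof (intro allI impI)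
      fix w :: "'b \<Rightarrow> real"
      assume "mixed w"
      with no_imp mixed_pure have "\<not> pareto_improvement (EU u (pure x) w) (EU v (pure x) w)"
        by blast
      then show "\<not> pareto_improvement (\<Sum>y\<in>UNIV. w y * u x y) (\<Sum>y\<in>UNIV. w y * v x y)"
        unfolding EU_pure_left .
    qed
  qed
  show ?thesis
    unfolding EU_expand_left[of u s t] EU_expand_left[of v s t]
  proof (rule bounded_tradeoff_convex[OF r _ _ s])
    show "\<forall>x. bounded_tradeoff r (EU u (pure x) t) (EU v (pure x) t)"
      using row by blast
    show "\<forall>w. mixed w \<longrightarrow> \<not> pareto_improvement (\<Sum>x\<in>UNIV. w x * EU u (pure x) t) (\<Sum>x\<in>UNIV. w x * EU v (pure x) t)"
    proof (intro allI impI)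
      fix w :: "'a \<Rightarrow> real"
      assume "mixed w"
      with no_imp t have "\<not> pareto_improvement (EU u w t) (EU v w t)"
        by blast
      then show "\<not> pareto_improvement (\<Sum>x\<in>UNIV. w x * EU u (pure x) t) (\<Sum>x\<in>UNIV. w x * EU v (pure x) t)"
        unfolding EU_expand_left[of u w t] EU_expand_left[of v w t] .
    qed
  qed
qed

lemma finite_bounded_tradeoff:
  fixes V1 V2 :: "'c::finite \<Rightarrow> real"
  assumes "\<forall>k. 0 < V1 k \<longrightarrow> V2 k < 0"
  shows "\<exists>r\<ge>1. \<forall>k. bounded_tradeoff r (V1 k) (V2 k)"
proof (intro exI conjI allI)
  define r where "r = 1 + (\<Sum>k\<in>UNIV. \<bar>V1 k / V2 k\<bar>)"
  show "1 \<le> r"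
    unfolding r_def by (simp add: sum_nonneg)
  fix k
  show "bounded_tradeoff r (V1 k) (V2 k)"
    unfolding bounded_tradeoff_def
  proof
    assume gain: "0 < V1 k"
    then have loss: "V2 k < 0"
      using assms by blast
    have "\<bar>V1 k / V2 k\<bar> \<le> r"
      using member_le_sum[of k UNIV "\<lambda>k. \<bar>V1 k / V2 k\<bar>"] unfolding r_def by simp
    moreover have "\<bar>V1 k / V2 k\<bar> = V1 k / (- V2 k)"
      using gain loss by (simp add: abs_divide)
    ultimately have "V1 k / (- V2 k) \<le> r"
      by simp
    then show "V1 k + r * V2 k \<le> 0"
      using loss pos_divide_le_eq[of "- V2 k"] by simp
  qed
qed

lemma pareto_efficient_pure_iff:
  "pareto_efficient pi1 pi2 (pure a1) (pure a2) \<longleftrightarrow>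
    (\<forall>s t. mixed s \<longrightarrow> mixed t \<longrightarrow>
       \<not> pareto_improvement (EU pi1 s t - pi1 a1 a2) (EU pi2 s t - pi2 a1 a2))"
  unfolding pareto_efficient_def pareto_improvement_def EU_pure_pure by auto

lemma pareto_efficient_commute:
  "pareto_efficient pi1 pi2 s1 s2 \<longleftrightarrow> pareto_efficient pi2 pi1 s1 s2"
  unfolding pareto_efficient_def by blast

lemma pareto_efficient_bounded_tradeoff:
  fixes pi1 pi2 :: "'a::finite \<Rightarrow> 'b::finite \<Rightarrow> real"
  assumes "pareto_efficient pi1 pi2 (pure a1) (pure a2)"
  obtains R where "1 \<le> R"
    "\<forall>s t. mixed s \<longrightarrow> mixed t \<longrightarrow> bounded_tradeoff R (EU pi1 s t - pi1 a1 a2) (EU pi2 s t - pi2 a1 a2)"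
proof -
  define u where "u x y = pi1 x y - pi1 a1 a2" for x y
  define v where "v x y = pi2 x y - pi2 a1 a2" for x y
  have no_imp: "\<forall>s t. mixed s \<longrightarrow> mixed t \<longrightarrow> \<not> pareto_improvement (EU u s t) (EU v s t)"
    using assms unfolding pareto_efficient_pure_iff u_def v_def by (simp add: EU_diff_const)
  have "\<not> pareto_improvement (u x y) (v x y)" for x y
    using no_imp[rule_format, OF mixed_pure mixed_pure, of x y] by (simp add: EU_pure_pure)
  then have "0 < u x y \<longrightarrow> v x y < 0" for x y
    unfolding pareto_improvement_def by (meson not_le order_less_imp_le)
  then have "\<forall>xy. 0 < case_prod u xy \<longrightarrow> case_prod v xy < 0"
    by auto
  then obtain R where R: "1 \<le> R" "\<forall>xy. bounded_tradeoff R (case_prod u xy) (case_prod v xy)"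
    using finite_bounded_tradeoff by blast
  have "bounded_tradeoff R (EU u s t) (EU v s t)" if "mixed s" "mixed t" for s t
    using R that by (intro bounded_tradeoff_mixed[OF _ _ no_imp]) auto
  then show ?thesis
    using that[OF R(1)] unfolding u_def v_def by (simp add: EU_diff_const)
qed

lemma pareto_efficient_mutual_tradeoff:
  fixes pi1 pi2 :: "'a::finite \<Rightarrow> 'b::finite \<Rightarrow> real"
  assumes pareto: "pareto_efficient pi1 pi2 (pure a1) (pure a2)"
  obtains R where "1 \<le> R"
    "\<And>s t. mixed s \<Longrightarrow> mixed t \<Longrightarrow>
      bounded_tradeoff R (EU pi1 s t - pi1 a1 a2) (EU pi2 s t - pi2 a1 a2) \<and>
      bounded_tradeoff R (EU pi2 s t - pi2 a1 a2) (EU pi1 s t - pi1 a1 a2)"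
proof -
  obtain R12 where R12: "1 \<le> R12" "\<forall>s t. mixed s \<longrightarrow> mixed t \<longrightarrow>
      bounded_tradeoff R12 (EU pi1 s t - pi1 a1 a2) (EU pi2 s t - pi2 a1 a2)"
    using pareto_efficient_bounded_tradeoff[OF pareto] .
  obtain R21 where R21: "1 \<le> R21" "\<forall>s t. mixed s \<longrightarrow> mixed t \<longrightarrow>
      bounded_tradeoff R21 (EU pi2 s t - pi2 a1 a2) (EU pi1 s t - pi1 a1 a2)"
    using pareto_efficient_bounded_tradeoff pareto pareto_efficient_commute by metis
  show thesis
  proof (rule that[of "max R12 R21"])
    show "1 \<le> max R12 R21"
      using R12 by simp
    fix s :: "'a \<Rightarrow> real" and t :: "'b \<Rightarrow> real"
    assume "mixed s" "mixed t"
    then show "bounded_tradeoff (max R12 R21) (EU pi1 s t - pi1 a1 a2) (EU pi2 s t - pi2 a1 a2) \<and>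
      bounded_tradeoff (max R12 R21) (EU pi2 s t - pi2 a1 a2) (EU pi1 s t - pi1 a1 a2)"
      using bounded_tradeoff_mono[of R12 "max R12 R21"] bounded_tradeoff_mono[of R21 "max R12 R21"] R12 R21
      by auto
  qed
qed

section \<open>Mutual invasions of a strict Pareto efficient equilibrium\<close>

lemma finite_uniform_gap:
  fixes f :: "'c::finite \<Rightarrow> real"
  assumes "\<forall>k. P k \<longrightarrow> 0 < f k"
  shows "\<exists>c>0. \<forall>k. P k \<longrightarrow> c \<le> f k"
proof (intro exI conjI allI impI)
  define c where "c = Min (insert 1 (f ` {k. P k}))"
  show "0 < c"
    using assms unfolding c_def by (subst Min_gr_iff) auto
  show "c \<le> f k" if "P k" for k
    using that unfolding c_def by (intro Min_le) auto
qed

lemma strict_nash_uniform_gap: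
  fixes pi1 pi2 :: "'a::finite \<Rightarrow> 'b::finite \<Rightarrow> real"
  assumes "strict_nash pi1 pi2 a1 a2"
  obtains c where "0 < c" "\<forall>x. x \<noteq> a1 \<longrightarrow> c \<le> pi1 a1 a2 - pi1 x a2"
    "\<forall>y. y \<noteq> a2 \<longrightarrow> c \<le> pi2 a1 a2 - pi2 a1 y"
proof -
  obtain c1 where "0 < c1" "\<forall>x. x \<noteq> a1 \<longrightarrow> c1 \<le> pi1 a1 a2 - pi1 x a2"
    using assms finite_uniform_gap[of "\<lambda>x. x \<noteq> a1" "\<lambda>x. pi1 a1 a2 - pi1 x a2"]
    unfolding strict_nash_def by auto
  moreover obtain c2 where "0 < c2" "\<forall>y. y \<noteq> a2 \<longrightarrow> c2 \<le> pi2 a1 a2 - pi2 a1 y"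
    using assms finite_uniform_gap[of "\<lambda>y. y \<noteq> a2" "\<lambda>y. pi2 a1 a2 - pi2 a1 y"]
    unfolding strict_nash_def by auto
  ultimately show ?thesis
    using that[of "min c1 c2"] by (simp add: min.coboundedI1 min.coboundedI2)
qed

lemma finite_payoff_lower_bound:
  fixes pi1 pi2 :: "'a::finite \<Rightarrow> 'b::finite \<Rightarrow> real"
  obtains M where "0 \<le> M" "\<forall>x y. - M \<le> pi1 x y - k1 \<and> - M \<le> pi2 x y - k2"
proof
  define M where "M = (\<Sum>xy\<in>UNIV. \<bar>pi1 (fst xy) (snd xy) - k1\<bar> + \<bar>pi2 (fst xy) (snd xy) - k2\<bar>)"
  show "0 \<le> M"
    unfolding M_def by (simp add: sum_nonneg)
  show "\<forall>x y. - M \<le> pi1 x y - k1 \<and> - M \<le> pi2 x y - k2"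
  proof (intro allI)
    fix x y
    have "\<bar>pi1 x y - k1\<bar> + \<bar>pi2 x y - k2\<bar> \<le> M"
      unfolding M_def
      using member_le_sum[of "(x, y)" UNIV "\<lambda>xy. \<bar>pi1 (fst xy) (snd xy) - k1\<bar> + \<bar>pi2 (fst xy) (snd xy) - k2\<bar>"]
      by simp
    then show "- M \<le> pi1 x y - k1 \<and> - M \<le> pi2 x y - k2"
      by linarith
  qed
qed

lemma incumbent_loss_bound:
  fixes e c L M p q g m P :: real
  assumes c: "0 < c" and L: "0 \<le> L" and e: "0 < e" "e < c / (c + L)"
    and p: "0 \<le> p" and g: "c * p \<le> g" and m: "- (M * q) \<le> m"
    and loss: "(1 - e) * g + e * m \<le> e * P"
  shows "L * p - M * q \<le> P"
proof -
  have "e * L < (1 - e) * c"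
    using e(2) c L by (simp add: less_divide_eq algebra_simps)
  moreover from this have "0 < (1 - e) * c"
    using L e(1) mult_nonneg_nonneg[of e L] by linarith
  then have "e \<le> 1"
    using c by (simp add: zero_less_mult_iff)
  ultimately have "e * (L * p) \<le> (1 - e) * (c * p)"
    using mult_right_mono[OF _ p, of "e * L" "(1 - e) * c"] by (simp add: mult.assoc)
  also have "\<dots> \<le> (1 - e) * g"
    using \<open>e \<le> 1\<close> g by (intro mult_left_mono) auto
  finally have "e * (L * p - M * q) \<le> e * P"
    using loss m e(1) mult_left_mono[OF m, of e] by (simp add: algebra_simps)
  then show ?thesis
    using e(1) by simp
qed

lemma mutual_invasion_forces_pure:
  fixes L M R p q P1 P2 :: real
  assumes R: "1 \<le> R" and M: "0 \<le> M" and L: "R * M < L" and pq: "0 \<le> p" "0 \<le> q"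
    and P1: "L * p - M * q \<le> P1" and P2: "L * q - M * p \<le> P2"
    and tradeoff12: "bounded_tradeoff R P1 P2" and tradeoff21: "bounded_tradeoff R P2 P1"
  shows "p = 0 \<and> q = 0"
proof -
  have "M \<le> R * M"
    using mult_right_mono[OF R M] by simp
  then have LM: "M < L"
    using L by linarith
  have "L \<le> R * L"
    using mult_right_mono[OF R, of L] LM M by simp
  then have coeffs: "0 < L - R * M" "0 < R * L - M"
    using L LM by linarith+
  have forced: "p = 0 \<and> q = 0"
    if "0 \<le> p" "0 \<le> q" "L * p - M * q \<le> P1" "L * q - M * p \<le> P2" "P1 + R * P2 \<le> 0"
    for p q P1 P2 :: real
  proof -
    have "p * (L - R * M) + q * (R * L - M) \<le> 0"
      using that mult_left_mono[OF that(4), of R] R by (simp add: algebra_simps)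
    moreover have "0 \<le> p * (L - R * M)" "0 \<le> q * (R * L - M)"
      using that coeffs by simp_all
    ultimately have "p * (L - R * M) = 0" "q * (R * L - M) = 0"
      by linarith+
    then show ?thesis
      using coeffs by simp
  qed
  consider "0 < P1" | "0 < P2" | "P1 \<le> 0" "P2 \<le> 0"
    by linarith
  then show ?thesis
  proof cases
    case 1
    then show ?thesis
      using forced[OF pq P1 P2] tradeoff12 unfolding bounded_tradeoff_def by blast
  next
    case 2
    then show ?thesis
      using forced[OF pq(2,1) P2 P1] tradeoff21 unfolding bounded_tradeoff_def by blast
  next
    case 3
    then have "(L - M) * (p + q) \<le> 0"
      using P1 P2 by (simp add: algebra_simps)
    then have "p + q \<le> 0"
      using LM by (simp add: mult_le_0_iff)
    then show ?thesis
      using pq by linarith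
  qed
qed

lemma invasion1_gain_bound:
  fixes pi1 :: "'a::finite \<Rightarrow> 'b::finite \<Rightarrow> real"
  assumes threshold: "0 < c" "0 \<le> L" "0 < e" "e < c / (c + L)"
    and gap: "\<forall>x. x \<noteq> a1 \<longrightarrow> c \<le> pi1 a1 a2 - pi1 x a2"
    and bound: "\<forall>y. - M \<le> pi1 a1 y - pi1 a1 a2"
    and mixed: "mixed s1" "mixed s2"
    and invades: "(1 - e) * pi1 a1 a2 + e * EU pi1 (pure a1) s2 \<le> (1 - e) * EU pi1 s1 (pure a2) + e * EU pi1 \<sigma> \<tau>"
  shows "L * (1 - s1 a1) - M * (1 - s2 a2) \<le> EU pi1 \<sigma> \<tau> - pi1 a1 a2"
proof (rule incumbent_loss_bound[OF threshold])
  show "0 \<le> 1 - s1 a1"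
    using mixed_le_1[OF mixed(1)] by simp
  show "c * (1 - s1 a1) \<le> pi1 a1 a2 - EU pi1 s1 (pure a2)"
    by (rule EU_pure_right_gap[where u = pi1, OF mixed(1) gap])
  have "- M * (1 - s2 a2) \<le> - pi1 a1 a2 - EU (\<lambda>x y. - pi1 x y) (pure a1) s2"
    using bound by (intro EU_pure_left_gap[OF mixed(2)]) simp
  then show "- (M * (1 - s2 a2)) \<le> EU pi1 (pure a1) s2 - pi1 a1 a2"
    by (simp add: EU_uminus)
  show "(1 - e) * (pi1 a1 a2 - EU pi1 s1 (pure a2)) + e * (EU pi1 (pure a1) s2 - pi1 a1 a2)
      \<le> e * (EU pi1 \<sigma> \<tau> - pi1 a1 a2)"
    using invades by (simp add: algebra_simps)
qed

lemma invasion2_gain_bound: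
  fixes pi2 :: "'a::finite \<Rightarrow> 'b::finite \<Rightarrow> real"
  assumes threshold: "0 < c" "0 \<le> L" "0 < e" "e < c / (c + L)"
    and gap: "\<forall>y. y \<noteq> a2 \<longrightarrow> c \<le> pi2 a1 a2 - pi2 a1 y"
    and bound: "\<forall>x. - M \<le> pi2 x a2 - pi2 a1 a2"
    and mixed: "mixed s1" "mixed s2"
    and invades: "(1 - e) * pi2 a1 a2 + e * EU pi2 s1 (pure a2) \<le> (1 - e) * EU pi2 (pure a1) s2 + e * EU pi2 \<sigma> \<tau>"
  shows "L * (1 - s2 a2) - M * (1 - s1 a1) \<le> EU pi2 \<sigma> \<tau> - pi2 a1 a2"
proof (rule incumbent_loss_bound[OF threshold])
  show "0 \<le> 1 - s2 a2"
    using mixed_le_1[OF mixed(2)] by simp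
  show "c * (1 - s2 a2) \<le> pi2 a1 a2 - EU pi2 (pure a1) s2"
    by (rule EU_pure_left_gap[where u = pi2, OF mixed(2) gap])
  have "- M * (1 - s1 a1) \<le> - pi2 a1 a2 - EU (\<lambda>x y. - pi2 x y) s1 (pure a2)"
    using bound by (intro EU_pure_right_gap[OF mixed(1)]) simp
  then show "- (M * (1 - s1 a1)) \<le> EU pi2 s1 (pure a2) - pi2 a1 a2"
    by (simp add: EU_uminus)
  show "(1 - e) * (pi2 a1 a2 - EU pi2 (pure a1) s2) + e * (EU pi2 s1 (pure a2) - pi2 a1 a2)
      \<le> e * (EU pi2 \<sigma> \<tau> - pi2 a1 a2)"
    using invades by (simp add: algebra_simps)
qed

lemma mutual_invasion_forces_tie:
  fixes pi1 pi2 :: "'a::finite \<Rightarrow> 'b::finite \<Rightarrow> real"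
  assumes pareto: "pareto_efficient pi1 pi2 (pure a1) (pure a2)"
    and strict: "strict_nash pi1 pi2 a1 a2"
  obtains ebar where "0 < ebar" "ebar < 1"
    "\<And>e1 e2 s1 s2 \<sigma> \<tau>. 0 < e1 \<Longrightarrow> e1 < ebar \<Longrightarrow> 0 < e2 \<Longrightarrow> e2 < ebar \<Longrightarrow>
      mixed s1 \<Longrightarrow> mixed s2 \<Longrightarrow> mixed \<sigma> \<Longrightarrow> mixed \<tau> \<Longrightarrow>
      (1 - e2) * pi1 a1 a2 + e2 * EU pi1 (pure a1) s2 \<le> (1 - e2) * EU pi1 s1 (pure a2) + e2 * EU pi1 \<sigma> \<tau> \<Longrightarrow>
      (1 - e1) * pi2 a1 a2 + e1 * EU pi2 s1 (pure a2) \<le> (1 - e1) * EU pi2 (pure a1) s2 + e1 * EU pi2 \<sigma> \<tau> \<Longrightarrow>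
      s1 = pure a1 \<and> s2 = pure a2 \<and> EU pi1 \<sigma> \<tau> = pi1 a1 a2 \<and> EU pi2 \<sigma> \<tau> = pi2 a1 a2"
proof -
  obtain c where c: "0 < c" and gap1: "\<forall>x. x \<noteq> a1 \<longrightarrow> c \<le> pi1 a1 a2 - pi1 x a2"
    and gap2: "\<forall>y. y \<noteq> a2 \<longrightarrow> c \<le> pi2 a1 a2 - pi2 a1 y"
    using strict_nash_uniform_gap[OF strict] .
  obtain R where R: "1 \<le> R" and tradeoff: "\<And>s t. mixed s \<Longrightarrow> mixed t \<Longrightarrow>
      bounded_tradeoff R (EU pi1 s t - pi1 a1 a2) (EU pi2 s t - pi2 a1 a2) \<and>
      bounded_tradeoff R (EU pi2 s t - pi2 a1 a2) (EU pi1 s t - pi1 a1 a2)"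
    using pareto_efficient_mutual_tradeoff[OF pareto] by blast
  obtain M where M0: "0 \<le> M" and M: "\<forall>x y. - M \<le> pi1 x y - pi1 a1 a2 \<and> - M \<le> pi2 x y - pi2 a1 a2"
    using finite_payoff_lower_bound .
  define L where "L = R * M + 1"
  have L: "R * M < L" "0 < L"
    unfolding L_def using R M0 by (simp_all add: add_nonneg_pos)
  show thesis
  proof (rule that[of "c / (c + L)"])
    show "0 < c / (c + L)" "c / (c + L) < 1"
      using c L by simp_all
    fix e1 e2 s1 s2 \<sigma> \<tau>
    assume e: "0 < e1" "e1 < c / (c + L)" "0 < e2" "e2 < c / (c + L)"
      and mixed: "mixed s1" "mixed s2" "mixed \<sigma>" "mixed \<tau>"
      and invades1: "(1 - e2) * pi1 a1 a2 + e2 * EU pi1 (pure a1) s2 \<le> (1 - e2) * EU pi1 s1 (pure a2) + e2 * EU pi1 \<sigma> \<tau>"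
      and invades2: "(1 - e1) * pi2 a1 a2 + e1 * EU pi2 s1 (pure a2) \<le> (1 - e1) * EU pi2 (pure a1) s2 + e1 * EU pi2 \<sigma> \<tau>"
    have gain1: "L * (1 - s1 a1) - M * (1 - s2 a2) \<le> EU pi1 \<sigma> \<tau> - pi1 a1 a2"
      using M by (intro invasion1_gain_bound[OF c less_imp_le[OF L(2)] e(3,4) gap1 _ mixed(1,2) invades1]) simp
    have gain2: "L * (1 - s2 a2) - M * (1 - s1 a1) \<le> EU pi2 \<sigma> \<tau> - pi2 a1 a2"
      using M by (intro invasion2_gain_bound[OF c less_imp_le[OF L(2)] e(1,2) gap2 _ mixed(1,2) invades2]) simp
    have "1 - s1 a1 = 0 \<and> 1 - s2 a2 = 0"
      using mixed_le_1[OF mixed(1)] mixed_le_1[OF mixed(2)] tradeoff[OF mixed(3,4)]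
      by (intro mutual_invasion_forces_pure[OF R M0 L(1) _ _ gain1 gain2]) simp_all
    moreover from this have "\<not> pareto_improvement (EU pi1 \<sigma> \<tau> - pi1 a1 a2) (EU pi2 \<sigma> \<tau> - pi2 a1 a2)"
      using pareto mixed(3,4) unfolding pareto_efficient_pure_iff by blast
    ultimately show "s1 = pure a1 \<and> s2 = pure a2 \<and> EU pi1 \<sigma> \<tau> = pi1 a1 a2 \<and> EU pi2 \<sigma> \<tau> = pi2 a1 a2"
      using mixed_eq_pure[OF mixed(1)] mixed_eq_pure[OF mixed(2)] gain1 gain2
      unfolding pareto_improvement_def by auto
  qed
qed

section \<open>Post-entry populations around a single incumbent type\<close>

lemma supp_pure: "supp (pure x) = {x}"
  unfolding supp_def pure_def by auto

lemma fdist_pure: "fdist (pure x)"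
proof -
  have "{y. pure x y \<noteq> 0} = {x}"
    unfolding pure_def by auto
  then show ?thesis
    unfolding fdist_def by (simp add: pure_def)
qed

lemma post_None [simp]: "post mu None e = mu"
  unfolding post_def by simp

lemma supp_post_pure_subset: "supp (post (pure th) m e) \<subseteq> insert th (set_option m)"
  unfolding supp_def post_def pure_def by (cases m) auto

lemma incumbent_in_supp_post: "e < 1 \<Longrightarrow> th \<in> supp (post (pure th) m e)"
  unfolding supp_def post_def pure_def by (cases m) auto

lemma mutant_in_supp_post: "0 < e \<Longrightarrow> e < 1 \<Longrightarrow> v \<in> supp (post (pure th) (Some v) e)"
  unfolding supp_def post_def pure_def by auto

lemma fit1_pure: "fit1 f (pure th) b' x = EU f (fst (b' x th)) (snd (b' x th))"
  unfolding fit1_def supp_pure by (simp add: pure_def)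

lemma fit2_pure: "fit2 f (pure th) b' y = EU f (fst (b' th y)) (snd (b' th y))"
  unfolding fit2_def supp_pure by (simp add: pure_def)

lemma fit1_post_Some:
  assumes "0 < e" "e < 1"
  shows "fit1 f (post (pure th) (Some v) e) b' x =
    (1 - e) * EU f (fst (b' x th)) (snd (b' x th)) + e * EU f (fst (b' x v)) (snd (b' x v))"
proof (cases "v = th")
  case True
  then have "post (pure th) (Some v) e = pure th"
    unfolding post_def pure_def by (auto simp: algebra_simps)
  then show ?thesis
    using True by (simp add: fit1_pure algebra_simps)
next
  case False
  then have "supp (post (pure th) (Some v) e) = {th, v}"
    using assms unfolding supp_def post_def pure_def by auto
  then show ?thesis
    using False unfolding fit1_def by (simp add: post_def pure_def)
qed

lemma fit2_post_Some:
  assumes "0 < e" "e < 1"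
  shows "fit2 f (post (pure th) (Some u) e) b' y =
    (1 - e) * EU f (fst (b' th y)) (snd (b' th y)) + e * EU f (fst (b' u y)) (snd (b' u y))"
proof (cases "u = th")
  case True
  then have "post (pure th) (Some u) e = pure th"
    unfolding post_def pure_def by (auto simp: algebra_simps)
  then show ?thesis
    using True by (simp add: fit2_pure algebra_simps)
next
  case False
  then have "supp (post (pure th) (Some u) e) = {th, u}"
    using assms unfolding supp_def post_def pure_def by auto
  then show ?thesis
    using False unfolding fit2_def by (simp add: post_def pure_def)
qed

lemma focal_nash:
  "focal mu1 mu2 b mu1' mu2' b' \<Longrightarrow> x \<in> supp mu1' \<Longrightarrow> y \<in> supp mu2' \<Longrightarrow>
    nash x y (fst (b' x y)) (snd (b' x y))"
  unfolding focal_def B1_def by blast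

lemma stable_against_pure_incumbentsI:
  fixes th1 th2 :: "('a::finite, 'b::finite) ptype"
  assumes ebar: "0 < ebar" "ebar < 1"
    and tie: "\<And>e1 e2 b'. 0 < e1 \<Longrightarrow> e1 < ebar \<Longrightarrow> 0 < e2 \<Longrightarrow> e2 < ebar \<Longrightarrow>
      focal (pure th1) (pure th2) b (post (pure th1) m1 e1) (post (pure th2) m2 e2) b' \<Longrightarrow>
      (\<forall>u\<in>set_option m1. fit1 pi1 (post (pure th2) m2 e2) b' th1 \<le> fit1 pi1 (post (pure th2) m2 e2) b' u) \<Longrightarrow>
      (\<forall>v\<in>set_option m2. fit2 pi2 (post (pure th1) m1 e1) b' th2 \<le> fit2 pi2 (post (pure th1) m1 e1) b' v) \<Longrightarrow>
      (\<forall>u\<in>set_option m1. fit1 pi1 (post (pure th2) m2 e2) b' u = fit1 pi1 (post (pure th2) m2 e2) b' th1) \<and>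
      (\<forall>v\<in>set_option m2. fit2 pi2 (post (pure th1) m1 e1) b' v = fit2 pi2 (post (pure th1) m1 e1) b' th2)"
  shows "stable_against pi1 pi2 (pure th1) (pure th2) b m1 m2"
  unfolding stable_against_def Let_def
proof (intro exI conjI allI impI ebar)
  fix e1 e2 :: real and b' :: "('a, 'b) eqmap"
  assume e: "0 < e1 \<and> e1 < ebar \<and> 0 < e2 \<and> e2 < ebar"
    and focal: "focal (pure th1) (pure th2) b (post (pure th1) m1 e1) (post (pure th2) m2 e2) b'"
  let ?mu1 = "post (pure th1) m1 e1" and ?mu2 = "post (pure th2) m2 e2"
  show "(\<exists>u. m1 = Some u \<and> (\<forall>th\<in>supp (pure th1). fit1 pi1 ?mu2 b' u < fit1 pi1 ?mu2 b' th)) \<or>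
        (\<exists>v. m2 = Some v \<and> (\<forall>th\<in>supp (pure th2). fit2 pi2 ?mu1 b' v < fit2 pi2 ?mu1 b' th)) \<or>
        balanced pi1 pi2 ?mu1 ?mu2 b'"
  proof (cases "(\<forall>u\<in>set_option m1. fit1 pi1 ?mu2 b' th1 \<le> fit1 pi1 ?mu2 b' u) \<and>
                (\<forall>v\<in>set_option m2. fit2 pi2 ?mu1 b' th2 \<le> fit2 pi2 ?mu1 b' v)")
    case True
    then have "(\<forall>u\<in>set_option m1. fit1 pi1 ?mu2 b' u = fit1 pi1 ?mu2 b' th1) \<and>
               (\<forall>v\<in>set_option m2. fit2 pi2 ?mu1 b' v = fit2 pi2 ?mu1 b' th2)"
      using tie e focal by blast
    then have "\<forall>x\<in>supp ?mu1. fit1 pi1 ?mu2 b' x = fit1 pi1 ?mu2 b' th1"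
      and "\<forall>y\<in>supp ?mu2. fit2 pi2 ?mu1 b' y = fit2 pi2 ?mu1 b' th2"
      using supp_post_pure_subset[of th1 m1 e1] supp_post_pure_subset[of th2 m2 e2] by auto
    then have "balanced pi1 pi2 ?mu1 ?mu2 b'"
      unfolding balanced_def by auto
    then show ?thesis by blast
  next
    case False
    then show ?thesis
      unfolding supp_pure by (cases m1; cases m2) (auto simp: not_le)
  qed
qed (use ebar in auto)

section \<open>Committed incumbents\<close>

definition committed1 :: "'a \<Rightarrow> ('a::finite, 'b::finite) ptype" where
  "committed1 a = (\<lambda>x _. pure a x)"

definition committed2 :: "'b \<Rightarrow> ('a::finite, 'b::finite) ptype" where
  "committed2 b = (\<lambda>_ y. pure b y)"

lemma EU_committed1: "mixed t \<Longrightarrow> EU (committed1 a) s t = s a"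
  unfolding committed1_def by (simp add: EU_row_only sum_mult_pure_right)

lemma EU_committed2: "mixed s \<Longrightarrow> EU (committed2 b) s t = t b"
  unfolding committed2_def by (simp add: EU_column_only sum_mult_pure_right)

lemma nash_committed1: "nash (committed1 a) th s1 s2 \<Longrightarrow> s1 = pure a"
proof -
  assume nash: "nash (committed1 a) th s1 s2"
  have "mixed s1" "mixed s2"
    using nash_mixed[OF nash] by simp_all
  moreover have "EU (committed1 a) (pure a) s2 \<le> EU (committed1 a) s1 s2"
    using nash mixed_pure unfolding nash_def by blast
  ultimately show ?thesis
    using mixed_le_1[of s1 a] by (intro mixed_eq_pure) (simp_all add: EU_committed1)
qed

lemma nash_committed2: "nash th (committed2 b) s1 s2 \<Longrightarrow> s2 = pure b"
proof -
  assume nash: "nash th (committed2 b) s1 s2"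
  have "mixed s1" "mixed s2"
    using nash_mixed[OF nash] by simp_all
  moreover have "EU (committed2 b) s1 (pure b) \<le> EU (committed2 b) s1 s2"
    using nash mixed_pure unfolding nash_def by blast
  ultimately show ?thesis
    using mixed_le_1[of s2 b] by (intro mixed_eq_pure) (simp_all add: EU_committed2)
qed

lemma nash_committed: "nash (committed1 a) (committed2 b) (pure a) (pure b)"
  unfolding nash_def
  by (auto simp: mixed_pure EU_committed1 EU_committed2 mixed_le_1)

lemma stable_against_mutant1:
  fixes pi1 pi2 :: "'a::finite \<Rightarrow> 'b::finite \<Rightarrow> real"
  assumes best_reply: "\<forall>x. pi1 x a2 \<le> pi1 a1 a2"
  shows "stable_against pi1 pi2 (pure (committed1 a1)) (pure (committed2 a2))
           (\<lambda>_ _. (pure a1, pure a2)) (Some u) None"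
proof (rule stable_against_pure_incumbentsI[where ebar = "1/2"])
  fix e1 e2 :: real and b' :: "('a, 'b) eqmap"
  assume e1: "0 < e1" "e1 < 1/2"
    and focal: "focal (pure (committed1 a1)) (pure (committed2 a2)) (\<lambda>_ _. (pure a1, pure a2))
                  (post (pure (committed1 a1)) (Some u) e1) (post (pure (committed2 a2)) None e2) b'"
  let ?th1 = "committed1 a1" and ?th2 = "committed2 a2"
  have supp: "?th1 \<in> supp (post (pure ?th1) (Some u) e1)" "u \<in> supp (post (pure ?th1) (Some u) e1)"
    "?th2 \<in> supp (post (pure ?th2) None e2)"
    using e1 incumbent_in_supp_post[of e1] mutant_in_supp_post[of e1] by (simp_all add: supp_pure)
  have nash_incumbents: "nash ?th1 ?th2 (fst (b' ?th1 ?th2)) (snd (b' ?th1 ?th2))"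
    and nash_mutant: "nash u ?th2 (fst (b' u ?th2)) (snd (b' u ?th2))"
    using focal_nash[OF focal] supp by simp_all
  define s1 where "s1 = fst (b' u ?th2)"
  have "b' ?th1 ?th2 = (pure a1, pure a2)"
    using nash_committed1[OF nash_incumbents] nash_committed2[OF nash_incumbents] by (simp add: prod_eq_iff)
  moreover have "b' u ?th2 = (s1, pure a2)" "mixed s1"
    using nash_committed2[OF nash_mutant] nash_mixed[OF nash_mutant] unfolding s1_def by (simp_all add: prod_eq_iff)
  moreover have "0 * (1 - s1 a1) \<le> pi1 a1 a2 - EU pi1 s1 (pure a2)"
    using best_reply by (intro EU_pure_right_gap[OF \<open>mixed s1\<close>]) simp
  ultimately have "fit1 pi1 (post (pure ?th2) None e2) b' u \<le> fit1 pi1 (post (pure ?th2) None e2) b' ?th1"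
    by (simp add: fit1_pure EU_pure_pure)
  then show "(\<forall>u'\<in>set_option (Some u). fit1 pi1 (post (pure ?th2) None e2) b' u' =
                                       fit1 pi1 (post (pure ?th2) None e2) b' ?th1) \<and>
             (\<forall>v\<in>set_option None. fit2 pi2 (post (pure ?th1) (Some u) e1) b' v =
                                   fit2 pi2 (post (pure ?th1) (Some u) e1) b' ?th2)"
    if "\<forall>u'\<in>set_option (Some u). fit1 pi1 (post (pure ?th2) None e2) b' ?th1 \<le>
                                  fit1 pi1 (post (pure ?th2) None e2) b' u'"
    using that by auto
qed simp_all

lemma stable_against_mutant2:
  fixes pi1 pi2 :: "'a::finite \<Rightarrow> 'b::finite \<Rightarrow> real"
  assumes best_reply: "\<forall>y. pi2 a1 y \<le> pi2 a1 a2"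
  shows "stable_against pi1 pi2 (pure (committed1 a1)) (pure (committed2 a2))
           (\<lambda>_ _. (pure a1, pure a2)) None (Some v)"
proof (rule stable_against_pure_incumbentsI[where ebar = "1/2"])
  fix e1 e2 :: real and b' :: "('a, 'b) eqmap"
  assume e2: "0 < e2" "e2 < 1/2"
    and focal: "focal (pure (committed1 a1)) (pure (committed2 a2)) (\<lambda>_ _. (pure a1, pure a2))
                  (post (pure (committed1 a1)) None e1) (post (pure (committed2 a2)) (Some v) e2) b'"
  let ?th1 = "committed1 a1" and ?th2 = "committed2 a2"
  have supp: "?th1 \<in> supp (post (pure ?th1) None e1)"
    "?th2 \<in> supp (post (pure ?th2) (Some v) e2)" "v \<in> supp (post (pure ?th2) (Some v) e2)"
    using e2 incumbent_in_supp_post[of e2] mutant_in_supp_post[of e2] by (simp_all add: supp_pure)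
  have nash_incumbents: "nash ?th1 ?th2 (fst (b' ?th1 ?th2)) (snd (b' ?th1 ?th2))"
    and nash_mutant: "nash ?th1 v (fst (b' ?th1 v)) (snd (b' ?th1 v))"
    using focal_nash[OF focal] supp by simp_all
  define s2 where "s2 = snd (b' ?th1 v)"
  have "b' ?th1 ?th2 = (pure a1, pure a2)"
    using nash_committed1[OF nash_incumbents] nash_committed2[OF nash_incumbents] by (simp add: prod_eq_iff)
  moreover have "b' ?th1 v = (pure a1, s2)" "mixed s2"
    using nash_committed1[OF nash_mutant] nash_mixed[OF nash_mutant] unfolding s2_def by (simp_all add: prod_eq_iff)
  moreover have "0 * (1 - s2 a2) \<le> pi2 a1 a2 - EU pi2 (pure a1) s2"
    using best_reply by (intro EU_pure_left_gap[OF \<open>mixed s2\<close>]) simp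
  ultimately have "fit2 pi2 (post (pure ?th1) None e1) b' v \<le> fit2 pi2 (post (pure ?th1) None e1) b' ?th2"
    by (simp add: fit2_pure EU_pure_pure)
  then show "(\<forall>u\<in>set_option None. fit1 pi1 (post (pure ?th2) (Some v) e2) b' u =
                                   fit1 pi1 (post (pure ?th2) (Some v) e2) b' ?th1) \<and>
             (\<forall>v'\<in>set_option (Some v). fit2 pi2 (post (pure ?th1) None e1) b' v' =
                                       fit2 pi2 (post (pure ?th1) None e1) b' ?th2)"
    if "\<forall>v'\<in>set_option (Some v). fit2 pi2 (post (pure ?th1) None e1) b' ?th2 \<le>
                                  fit2 pi2 (post (pure ?th1) None e1) b' v'"
    using that by auto
qed simp_all

lemma stable_against_two_mutants:
  fixes pi1 pi2 :: "'a::finite \<Rightarrow> 'b::finite \<Rightarrow> real"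
  assumes "pareto_efficient pi1 pi2 (pure a1) (pure a2)" and "strict_nash pi1 pi2 a1 a2"
  shows "stable_against pi1 pi2 (pure (committed1 a1)) (pure (committed2 a2))
           (\<lambda>_ _. (pure a1, pure a2)) (Some u) (Some v)"
proof (rule mutual_invasion_forces_tie[OF assms], goal_cases)
  case (1 ebar)
  note ebar = "1"(1,2) and tie = "1"(3)
  show ?thesis
  proof (rule stable_against_pure_incumbentsI[OF ebar])
    fix e1 e2 :: real and b' :: "('a, 'b) eqmap"
    let ?th1 = "committed1 a1" and ?th2 = "committed2 a2"
    let ?mu1 = "post (pure ?th1) (Some u) e1" and ?mu2 = "post (pure ?th2) (Some v) e2"
    assume e: "0 < e1" "e1 < ebar" "0 < e2" "e2 < ebar"
      and focal: "focal (pure ?th1) (pure ?th2) (\<lambda>_ _. (pure a1, pure a2)) ?mu1 ?mu2 b'"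
      and invades1: "\<forall>u'\<in>set_option (Some u). fit1 pi1 ?mu2 b' ?th1 \<le> fit1 pi1 ?mu2 b' u'"
      and invades2: "\<forall>v'\<in>set_option (Some v). fit2 pi2 ?mu1 b' ?th2 \<le> fit2 pi2 ?mu1 b' v'"
    have e_lt_1: "e1 < 1" "e2 < 1"
      using e ebar by linarith+
    have supp: "?th1 \<in> supp ?mu1" "u \<in> supp ?mu1" "?th2 \<in> supp ?mu2" "v \<in> supp ?mu2"
      using e e_lt_1 by (simp_all add: incumbent_in_supp_post mutant_in_supp_post)
    have nash: "nash x y (fst (b' x y)) (snd (b' x y))" if "x \<in> {?th1, u}" "y \<in> {?th2, v}" for x y
      using focal_nash[OF focal] supp that by blast
    define s1 where "s1 = fst (b' u ?th2)"
    define s2 where "s2 = snd (b' ?th1 v)"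
    define \<sigma> where "\<sigma> = fst (b' u v)"
    define \<tau> where "\<tau> = snd (b' u v)"
    have cells: "b' ?th1 ?th2 = (pure a1, pure a2)" "b' u ?th2 = (s1, pure a2)"
      "b' ?th1 v = (pure a1, s2)" "b' u v = (\<sigma>, \<tau>)"
      using nash_committed1[OF nash] nash_committed2[OF nash]
      unfolding s1_def s2_def \<sigma>_def \<tau>_def by (simp_all add: prod_eq_iff)
    have mixed: "mixed s1" "mixed s2" "mixed \<sigma>" "mixed \<tau>"
      using nash_mixed[OF nash] unfolding s1_def s2_def \<sigma>_def \<tau>_def by simp_all
    have "s1 = pure a1 \<and> s2 = pure a2 \<and> EU pi1 \<sigma> \<tau> = pi1 a1 a2 \<and> EU pi2 \<sigma> \<tau> = pi2 a1 a2"
      using tie[OF e mixed] invades1 invades2 e e_lt_1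
      by (simp add: fit1_post_Some fit2_post_Some cells EU_pure_pure)
    then show "(\<forall>u'\<in>set_option (Some u). fit1 pi1 ?mu2 b' u' = fit1 pi1 ?mu2 b' ?th1) \<and>
               (\<forall>v'\<in>set_option (Some v). fit2 pi2 ?mu1 b' v' = fit2 pi2 ?mu1 b' ?th2)"
      using e e_lt_1 by (simp add: fit1_post_Some fit2_post_Some cells EU_pure_pure)
  qed
qed

lemma stable_config_committed:
  fixes pi1 pi2 :: "'a::finite \<Rightarrow> 'b::finite \<Rightarrow> real"
  assumes pareto: "pareto_efficient pi1 pi2 (pure a1) (pure a2)" and strict: "strict_nash pi1 pi2 a1 a2"
  shows "stable_config pi1 pi2 (pure (committed1 a1)) (pure (committed2 a2)) (\<lambda>_ _. (pure a1, pure a2))"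
  unfolding stable_config_def
proof (intro conjI allI impI)
  show "fdist (pure (committed1 a1))" "fdist (pure (committed2 a2))"
    by (rule fdist_pure)+
  show "B1 (pure (committed1 a1)) (pure (committed2 a2)) (\<lambda>_ _. (pure a1, pure a2))"
    unfolding B1_def supp_pure by (simp add: nash_committed)
  show "balanced pi1 pi2 (pure (committed1 a1)) (pure (committed2 a2)) (\<lambda>_ _. (pure a1, pure a2))"
    unfolding balanced_def supp_pure by simp
  have best_reply: "\<forall>x. pi1 x a2 \<le> pi1 a1 a2" "\<forall>y. pi2 a1 y \<le> pi2 a1 a2"
    using strict unfolding strict_nash_def by (metis order.strict_implies_order order_refl)+
  fix m1 m2 :: "('a, 'b) ptype option"
  assume "m1 \<noteq> None \<or> m2 \<noteq> None"
  then show "stable_against pi1 pi2 (pure (committed1 a1)) (pure (committed2 a2)) (\<lambda>_ _. (pure a1, pure a2)) m1 m2"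
    by (cases m1; cases m2)
      (simp_all add: best_reply stable_against_mutant1 stable_against_mutant2
        stable_against_two_mutants[OF pareto strict])
qed

theorem mainTheorem4:
  fixes pi1 pi2 :: "'a::finite \<Rightarrow> 'b::finite \<Rightarrow> real" and a1 :: 'a and a2 :: 'b
  assumes "pareto_efficient pi1 pi2 (pure a1) (pure a2)"
    and "strict_nash pi1 pi2 a1 a2"
  shows "\<exists>mu1 mu2 b. stable_config pi1 pi2 mu1 mu2 b \<and>
           (\<forall>x y. outcome mu1 mu2 b x y = (if x = a1 \<and> y = a2 then 1 else 0))"
proof (intro exI conjI allI)
  show "stable_config pi1 pi2 (pure (committed1 a1)) (pure (committed2 a2)) (\<lambda>_ _. (pure a1, pure a2))"
    using stable_config_committed[OF assms] .
  show "outcome (pure (committed1 a1)) (pure (committed2 a2)) (\<lambda>_ _. (pure a1, pure a2)) x y =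
          (if x = a1 \<and> y = a2 then 1 else 0)" for x y
    unfolding outcome_def supp_pure by (simp add: pure_def)
qed

end
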